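(* For $\xi\in\mathbb{R}$ and $\psi\in H_0^2((-1,1))$ let $E_0'(\psi)=\frac12\int_{-1}^1|B|^2(\xi^2|\psi|^2+|\psi'|^2)dx_2-\frac12g[\rho]\psi(0)^2$. Then: (i) if $|B|\ge|B|_c$, then $E_0'(\psi)\ge0$ for every $\psi$, and moreover $E_0'(\psi)\ge\frac12\int_{-1}^1\big((|B|^2-|B|_c^2)|\psi'|^2+|B|^2\xi^2|\psi|^2\big)dx_2$; (ii) if $|B|<|B|_c$ and $|\xi|\ge|\xi|^B_{hc}$, then $E_0'(\psi)\ge0$ for every $\psi$; (iii) if $|B|<|B|_c$ and $0<|\xi|<|\xi|^B_{hc}$, then there exists $\psi$ with $E_0'(\psi)<0$.
   Context: $g>0$, $[\rho]>0$, $B\ne0$ constants. $|B|_c^2:=\sup\{g[\rho]\psi(0)^2/\int_{-1}^1|\psi'|^2dx_2: 0\ne\psi\in H_0^1((-1,1))\}$; for $|B|<|B|_c$, $(|\xi|^B_{hc})^2:=\sup\{(g[\rho]\psi(0)^2-|B|^2\int_{-1}^1|\psi'|^2dx_2)/(|B|^2\int_{-1}^1|\psi|^2dx_2): 0\ne\psi\in H_0^1((-1,1))\}$. *)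

theory Defs
  imports "HOL-Analysis.Analysis"
begin

text \<open>One-dimensional Sobolev space H_0^1((-1,1)), via the (absolutely) continuous
representative: psi belongs to H_0^1 with weak derivative dpsi iff dpsi is square
integrable on (-1,1), psi(x) = integral of dpsi from -1 to x on [-1,1], and psi(1) = 0
(so psi vanishes at both endpoints).\<close>
definition H01_deriv :: "(real \<Rightarrow> real) \<Rightarrow> (real \<Rightarrow> real) \<Rightarrow> bool" where
  "H01_deriv \<psi> d\<psi> \<longleftrightarrow>
     set_borel_measurable lborel {-1..1} d\<psi> \<and>
     set_integrable lborel {-1..1} (\<lambda>x. (d\<psi> x)\<^sup>2) \<and>
     (\<forall>x\<in>{-1..1}. \<psi> x = (LBINT t=-1..x. d\<psi> t)) \<and>
     \<psi> 1 = 0"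

definition H02_derivs :: "(real \<Rightarrow> real) \<Rightarrow> (real \<Rightarrow> real) \<Rightarrow> (real \<Rightarrow> real) \<Rightarrow> bool" where
  "H02_derivs \<psi> d\<psi> dd\<psi> \<longleftrightarrow> H01_deriv \<psi> d\<psi> \<and> H01_deriv d\<psi> dd\<psi>"

definition nonzero_on :: "(real \<Rightarrow> real) \<Rightarrow> bool" where
  "nonzero_on \<psi> \<longleftrightarrow> (\<exists>x\<in>{-1..1}. \<psi> x \<noteq> 0)"

definition Bc_sq :: "real \<Rightarrow> real \<Rightarrow> real" where
  "Bc_sq g rho = Sup {g * rho * (\<psi> 0)\<^sup>2 / (LBINT x=-1..1. (d\<psi> x)\<^sup>2) | \<psi> d\<psi>.
                      H01_deriv \<psi> d\<psi> \<and> nonzero_on \<psi>}"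

definition Bc :: "real \<Rightarrow> real \<Rightarrow> real" where
  "Bc g rho = sqrt (Bc_sq g rho)"

definition xi_hc_sq :: "real \<Rightarrow> real \<Rightarrow> real \<Rightarrow> real" where
  "xi_hc_sq g rho nB = Sup {(g * rho * (\<psi> 0)\<^sup>2 - nB\<^sup>2 * (LBINT x=-1..1. (d\<psi> x)\<^sup>2))
                          / (nB\<^sup>2 * (LBINT x=-1..1. (\<psi> x)\<^sup>2)) | \<psi> d\<psi>.
                      H01_deriv \<psi> d\<psi> \<and> nonzero_on \<psi>}"

definition xi_hc :: "real \<Rightarrow> real \<Rightarrow> real \<Rightarrow> real" where
  "xi_hc g rho nB = sqrt (xi_hc_sq g rho nB)"

definition E0' :: "real \<Rightarrow> real \<Rightarrow> real \<Rightarrow> real \<Rightarrow> (real \<Rightarrow> real) \<Rightarrow> (real \<Rightarrow> real) \<Rightarrow> real" where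
  "E0' g rho nB \<xi> \<psi> d\<psi> =
     1/2 * (LBINT x=-1..1. nB\<^sup>2 * (\<xi>\<^sup>2 * (\<psi> x)\<^sup>2 + (d\<psi> x)\<^sup>2)) - 1/2 * g * rho * (\<psi> 0)\<^sup>2"

end

theory Submission
  imports Defs
begin

text \<open>
  Write \<open>I = \<integral>\<psi>\<^sup>2\<close> and \<open>D = \<integral>\<psi>'\<^sup>2\<close>, so that
  \<open>E\<^sub>0'(\<psi>) = (|B|\<^sup>2\<xi>\<^sup>2 I + |B|\<^sup>2 D - g[\<rho>] \<psi>(0)\<^sup>2) / 2\<close>.
  Parts (i) and (ii) only use that the two suprema are upper bounds:
  \<open>g[\<rho>] \<psi>(0)\<^sup>2 \<le> |B|\<^sub>c\<^sup>2 D\<close> and \<open>g[\<rho>] \<psi>(0)\<^sup>2 - |B|\<^sup>2 D \<le> (|\<xi>|\<^sup>B\<^sub>h\<^sub>c)\<^sup>2 |B|\<^sup>2 I\<close>;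
  both suprema are finite because \<open>\<psi>(0)\<^sup>2 \<le> D\<close> and \<open>\<delta> \<psi>(0)\<^sup>2 \<le> 2 I + 2 \<delta>\<^sup>2 D\<close> for \<open>0 < \<delta> \<le> 1\<close>.
  For (iii), a function \<open>\<psi> \<in> H\<^sub>0\<^sup>1\<close> beyond the supremum has \<open>E\<^sub>0'(\<psi>) < 0\<close>, and it must be
  approximated in \<open>H\<^sub>0\<^sup>2\<close>. We use Bernstein polynomials of degree \<open>n + 2\<close> whose coefficients
  sample \<open>\<psi>\<close> on a grid of mesh \<open>2/n\<close> clamped to \<open>[-1,1]\<close>: the first two and the last two
  coefficients vanish, so the polynomial and its derivative vanish at \<open>\<plusminus>1\<close>. They converge
  uniformly to \<open>\<psi>\<close>, and Jensen's inequality for the Bernstein weights together with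
  Cauchy-Schwarz on each grid cell bounds their Dirichlet energy by \<open>(1 + 2/n) D\<close>. Hence
  \<open>E\<^sub>0'\<close> of the approximants tends to at most \<open>E\<^sub>0'(\<psi>) < 0\<close>.
\<close>

section \<open>Bernstein polynomials on \<open>[-1,1]\<close>\<close>

definition bernstein_poly :: "(nat \<Rightarrow> real) \<Rightarrow> nat \<Rightarrow> real \<Rightarrow> real" where
  "bernstein_poly c n x = (\<Sum>k\<le>n. c k * Bernstein n k ((x + 1) / 2))"

definition forward_diff :: "(nat \<Rightarrow> real) \<Rightarrow> nat \<Rightarrow> real" where
  "forward_diff c k = c (Suc k) - c k"

lemma Bernstein_has_real_derivative:
  "(Bernstein (Suc n) k has_real_derivative
     real (Suc n) * ((if k = 0 then 0 else Bernstein n (k - 1) t) - Bernstein n k t)) (at t)"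
proof (cases k)
  case 0
  have "((\<lambda>t. (1 - t) ^ Suc n) has_real_derivative real (Suc n) * (1 - t) ^ (Suc n - Suc 0) * (-1)) (at t)"
    by (rule DERIV_chain2[OF DERIV_pow]) (auto intro!: derivative_eq_intros)
  thus ?thesis using 0 by (simp add: Bernstein_def[abs_def] algebra_simps)
next
  case (Suc j)
  define C where "C = real (Suc n choose Suc j)"
  have d: "((\<lambda>t. C * (t ^ Suc j * (1 - t) ^ (n - j))) has_real_derivative
      C * (real (Suc j) * t ^ j * (1 - t) ^ (n - j) - t ^ Suc j * (real (n - j) * (1 - t) ^ (n - j - 1)))) (at t)"
    by (rule DERIV_cong[OF DERIV_cmult[OF DERIV_mult[OF DERIV_pow DERIV_chain2[OF DERIV_pow, of "\<lambda>t. 1 - t"]]]])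
      (auto intro!: derivative_eq_intros simp: algebra_simps)
  have e1: "C * real (Suc j) = real (Suc n) * real (n choose j)"
    unfolding C_def using Suc_times_binomial_eq[of n j] by (metis of_nat_mult)
  have e2: "C * real (n - j) = real (Suc n) * real (n choose Suc j)"
    unfolding C_def using binomial_absorb_comp[of "Suc n" "Suc j"]
    by (metis diff_Suc_1 diff_Suc_Suc of_nat_mult mult.commute)
  have "C * (real (Suc j) * t ^ j * (1 - t) ^ (n - j) - t ^ Suc j * (real (n - j) * (1 - t) ^ (n - j - 1)))
      = (C * real (Suc j)) * t ^ j * (1 - t) ^ (n - j) - (C * real (n - j)) * t ^ Suc j * (1 - t) ^ (n - Suc j)"
    by (simp add: algebra_simps)
  also have "\<dots> = real (Suc n) * (Bernstein n j t - Bernstein n (Suc j) t)"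
    unfolding e1 e2 Bernstein_def by (simp add: algebra_simps)
  finally have "((\<lambda>t. C * (t ^ Suc j * (1 - t) ^ (n - j))) has_real_derivative
      real (Suc n) * (Bernstein n j t - Bernstein n (Suc j) t)) (at t)"
    using d by simp
  moreover have "Bernstein (Suc n) k = (\<lambda>t. C * (t ^ Suc j * (1 - t) ^ (n - j)))"
    by (auto simp: Suc Bernstein_def C_def)
  ultimately show ?thesis using Suc by simp
qed

lemma Bernstein_sum_has_real_derivative:
  "((\<lambda>t. \<Sum>k\<le>Suc n. c k * Bernstein (Suc n) k t) has_real_derivative
     real (Suc n) * (\<Sum>k\<le>n. (c (Suc k) - c k) * Bernstein n k t)) (at t)"
proof -
  have "(\<Sum>k\<le>Suc n. c k * (real (Suc n) * ((if k = 0 then 0 else Bernstein n (k - 1) t) - Bernstein n k t)))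
     = real (Suc n) * ((\<Sum>k\<le>Suc n. c k * (if k = 0 then 0 else Bernstein n (k - 1) t))
       - (\<Sum>k\<le>Suc n. c k * Bernstein n k t))"
    by (simp add: sum_distrib_left sum_subtractf algebra_simps)
  also have "(\<Sum>k\<le>Suc n. c k * (if k = 0 then 0 else Bernstein n (k - 1) t)) = (\<Sum>k\<le>n. c (Suc k) * Bernstein n k t)"
    by (subst sum.atMost_Suc_shift) simp
  also have "(\<Sum>k\<le>Suc n. c k * Bernstein n k t) = (\<Sum>k\<le>n. c k * Bernstein n k t)"
    by (simp add: Bernstein_def)
  finally have eq: "(\<Sum>k\<le>Suc n. c k * (real (Suc n) * ((if k = 0 then 0 else Bernstein n (k - 1) t) - Bernstein n k t)))
     = real (Suc n) * (\<Sum>k\<le>n. (c (Suc k) - c k) * Bernstein n k t)"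
    by (simp add: sum_subtractf algebra_simps)
  have "((\<lambda>t. \<Sum>k\<le>Suc n. c k * Bernstein (Suc n) k t) has_real_derivative
     (\<Sum>k\<le>Suc n. c k * (real (Suc n) * ((if k = 0 then 0 else Bernstein n (k - 1) t) - Bernstein n k t)))) (at t)"
    by (intro DERIV_sum DERIV_cmult Bernstein_has_real_derivative)
  thus ?thesis using eq by simp
qed

lemma bernstein_poly_has_real_derivative:
  "(bernstein_poly c (Suc n) has_real_derivative
     real (Suc n) / 2 * bernstein_poly (forward_diff c) n x) (at x)"
proof -
  have "((\<lambda>x. \<Sum>k\<le>Suc n. c k * Bernstein (Suc n) k ((x + 1) / 2)) has_real_derivative
     real (Suc n) * (\<Sum>k\<le>n. (c (Suc k) - c k) * Bernstein n k ((x + 1) / 2)) * (1 / 2)) (at x)"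
    by (rule DERIV_chain2[OF Bernstein_sum_has_real_derivative]) (auto intro!: derivative_eq_intros)
  thus ?thesis by (simp add: bernstein_poly_def[abs_def] forward_diff_def)
qed

lemma bernstein_poly_minus_one [simp]: "bernstein_poly c n (-1) = c 0"
proof -
  have "(\<Sum>k\<le>n. c k * Bernstein n k 0) = (\<Sum>k\<le>n. if k = 0 then c k else 0)"
    by (rule sum.cong) (auto simp: Bernstein_def)
  thus ?thesis by (simp add: bernstein_poly_def)
qed

lemma bernstein_poly_one [simp]: "bernstein_poly c n 1 = c n"
proof -
  have "(\<Sum>k\<le>n. c k * Bernstein n k 1) = (\<Sum>k\<le>n. if k = n then c k else 0)"
    by (rule sum.cong) (auto simp: Bernstein_def)
  thus ?thesis by (simp add: bernstein_poly_def)
qed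

lemma continuous_on_bernstein_poly [continuous_intros]: "continuous_on S (bernstein_poly c n)"
  unfolding bernstein_poly_def[abs_def] Bernstein_def by (intro continuous_intros) auto

lemma Bernstein_has_integral:
  assumes "k \<le> n"
  shows "((\<lambda>x. Bernstein n k ((x + 1) / 2)) has_integral 2 / real (Suc n)) {-1..1}"
proof -
  \<comment> \<open>with the coefficients of the indicator of \<open>{..k}\<close>, the derivative formula yields \<open>-Bernstein n k\<close>\<close>
  define c where "c j = (if j \<le> k then 1 else 0 :: real)" for j
  have "forward_diff c = (\<lambda>j. if j = k then -1 else 0)"
    by (auto simp: forward_diff_def c_def)
  hence "bernstein_poly (forward_diff c) n x = (\<Sum>j\<le>n. if j = k then - Bernstein n j ((x + 1) / 2) else 0)" for x
    unfolding bernstein_poly_def by (intro sum.cong) auto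
  hence eq: "bernstein_poly (forward_diff c) n x = - Bernstein n k ((x + 1) / 2)" for x
    using assms by simp
  have "((\<lambda>x. real (Suc n) / 2 * bernstein_poly (forward_diff c) n x) has_integral
      bernstein_poly c (Suc n) 1 - bernstein_poly c (Suc n) (-1)) {-1..1}"
    using bernstein_poly_has_real_derivative[of c n]
    by (intro fundamental_theorem_of_calculus)
       (auto simp: has_real_derivative_iff_has_vector_derivative[symmetric] has_field_derivative_at_within)
  also have "bernstein_poly c (Suc n) 1 - bernstein_poly c (Suc n) (-1) = -1"
    using assms by (simp add: c_def)
  finally have "((\<lambda>x. - 2 / real (Suc n) * (real (Suc n) / 2 * bernstein_poly (forward_diff c) n x))
      has_integral - 2 / real (Suc n) * -1) {-1..1}"
    by (rule has_integral_mult_right)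
  moreover have "- 2 / real (Suc n) * (real (Suc n) / 2 * bernstein_poly (forward_diff c) n x)
      = Bernstein n k ((x + 1) / 2)" for x
    using eq[of x] by (simp add: field_simps)
  ultimately show ?thesis by simp
qed

lemma bernstein_poly_has_integral:
  "(bernstein_poly c n has_integral 2 / real (Suc n) * (\<Sum>k\<le>n. c k)) {-1..1}"
proof -
  have "(bernstein_poly c n has_integral (\<Sum>k\<le>n. c k * (2 / real (Suc n)))) {-1..1}"
    unfolding bernstein_poly_def[abs_def]
    by (intro has_integral_sum has_integral_mult_right Bernstein_has_integral) auto
  thus ?thesis by (metis sum_distrib_right mult.commute)
qed

lemma square_sum_le_sum_square:
  fixes c w :: "nat \<Rightarrow> real"
  assumes "\<And>k. k \<in> A \<Longrightarrow> 0 \<le> w k" "(\<Sum>k\<in>A. w k) = 1"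
  shows "(\<Sum>k\<in>A. c k * w k)\<^sup>2 \<le> (\<Sum>k\<in>A. (c k)\<^sup>2 * w k)"
proof -
  define a where "a = (\<Sum>k\<in>A. c k * w k)"
  have "0 \<le> (\<Sum>k\<in>A. w k * (c k - a)\<^sup>2)" using assms(1) by (intro sum_nonneg) auto
  also have "\<dots> = (\<Sum>k\<in>A. (c k)\<^sup>2 * w k) - 2 * a * (\<Sum>k\<in>A. c k * w k) + a\<^sup>2 * (\<Sum>k\<in>A. w k)"
    by (simp add: power2_eq_square algebra_simps sum.distrib sum_subtractf sum_distrib_left)
  also have "\<dots> = (\<Sum>k\<in>A. (c k)\<^sup>2 * w k) - a\<^sup>2" using assms(2) by (simp add: a_def power2_eq_square)
  finally show ?thesis by (simp add: a_def)
qed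

lemma bernstein_poly_square_le:
  assumes "x \<in> {-1..1}"
  shows "(bernstein_poly c n x)\<^sup>2 \<le> bernstein_poly (\<lambda>k. (c k)\<^sup>2) n x"
  unfolding bernstein_poly_def using assms
  by (intro square_sum_le_sum_square Bernstein_nonneg) auto

lemma integral_square_bernstein_poly_le:
  "integral {-1..1} (\<lambda>x. (bernstein_poly c n x)\<^sup>2) \<le> 2 / real (Suc n) * (\<Sum>k\<le>n. (c k)\<^sup>2)"
proof -
  have "integral {-1..1} (\<lambda>x. (bernstein_poly c n x)\<^sup>2) \<le> integral {-1..1} (bernstein_poly (\<lambda>k. (c k)\<^sup>2) n)"
    by (intro integral_le integrable_continuous_interval continuous_intros bernstein_poly_square_le)
  also have "\<dots> = 2 / real (Suc n) * (\<Sum>k\<le>n. (c k)\<^sup>2)"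
    by (rule integral_unique[OF bernstein_poly_has_integral])
  finally show ?thesis .
qed

lemma bernstein_poly_diff_le:
  assumes "\<And>k. k \<le> n \<Longrightarrow> \<bar>c k - c' k\<bar> \<le> e" and "x \<in> {-1..1}"
  shows "\<bar>bernstein_poly c n x - bernstein_poly c' n x\<bar> \<le> e"
proof -
  have B: "0 \<le> Bernstein n k ((x + 1) / 2)" for k
    using assms(2) by (intro Bernstein_nonneg) auto
  have "\<bar>bernstein_poly c n x - bernstein_poly c' n x\<bar> = \<bar>\<Sum>k\<le>n. (c k - c' k) * Bernstein n k ((x + 1) / 2)\<bar>"
    by (simp add: bernstein_poly_def sum_subtractf algebra_simps)
  also have "\<dots> \<le> (\<Sum>k\<le>n. \<bar>c k - c' k\<bar> * Bernstein n k ((x + 1) / 2))"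
    using B by (intro order_trans[OF sum_abs] sum_mono) (simp add: abs_mult)
  also have "\<dots> \<le> (\<Sum>k\<le>n. e * Bernstein n k ((x + 1) / 2))"
    using assms(1) B by (intro sum_mono mult_right_mono) auto
  also have "\<dots> = e" by (simp flip: sum_distrib_left)
  finally show ?thesis .
qed

lemma uniform_limit_bernstein_poly:
  assumes "continuous_on {-1..1} f"
  shows "uniform_limit {-1..1} (\<lambda>n. bernstein_poly (\<lambda>k. f (2 * real k / real n - 1)) n) f sequentially"
proof -
  have cont: "continuous_on {0..1} (\<lambda>t. f (2 * t - 1))"
    by (rule continuous_on_compose2[OF assms]) (auto intro!: continuous_intros)
  show ?thesis unfolding uniform_limit_sequentially_iff
  proof (intro allI impI)
    fix e :: real assume "0 < e"
    then obtain N where N: "\<And>n t. N \<le> n \<Longrightarrow> t \<in> {0..1} \<Longrightarrow>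
        \<bar>f (2 * t - 1) - (\<Sum>k\<le>n. f (2 * (real k / real n) - 1) * Bernstein n k t)\<bar> < e"
      using Bernstein_Weierstrass[OF cont] by blast
    show "\<exists>N. \<forall>n\<ge>N. \<forall>x\<in>{-1..1}. dist (bernstein_poly (\<lambda>k. f (2 * real k / real n - 1)) n x) (f x) < e"
    proof (intro exI allI impI ballI)
      fix n x assume "N \<le> n" "x \<in> {-1..(1::real)}"
      moreover have "2 * ((x + 1) / 2) - 1 = x" by (simp add: field_simps)
      ultimately have "\<bar>f x - (\<Sum>k\<le>n. f (2 * (real k / real n) - 1) * Bernstein n k ((x + 1) / 2))\<bar> < e"
        using N[of n "(x + 1) / 2"] by (simp only:) auto
      thus "dist (bernstein_poly (\<lambda>k. f (2 * real k / real n - 1)) n x) (f x) < e"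
        by (simp add: bernstein_poly_def dist_real_def abs_minus_commute)
    qed
  qed
qed

section \<open>The space \<open>H\<^sub>0\<^sup>1\<close>\<close>

lemma interval_integral_minus_one_one:
  fixes f :: "real \<Rightarrow> real"
  shows "set_integrable lborel {-1..1} f \<Longrightarrow> (LBINT x=-1..1. f x) = integral {-1..1} f"
  using interval_integral_eq_integral[of "-1" 1 f] by (simp add: one_ereal_def)

lemma H01_deriv_square_integrable:
  "H01_deriv \<psi> d \<Longrightarrow> (\<lambda>x. (d x)\<^sup>2) integrable_on {-1..1}"
  unfolding H01_deriv_def by (auto dest: set_borel_integral_eq_integral(1))

lemma H01_LBINT_deriv_square:
  "H01_deriv \<psi> d \<Longrightarrow> (LBINT x=-1..1. (d x)\<^sup>2) = integral {-1..1} (\<lambda>x. (d x)\<^sup>2)"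
  unfolding H01_deriv_def by (auto intro: interval_integral_minus_one_one)

lemma H01_deriv_set_integrable:
  assumes "H01_deriv \<psi> d"
  shows "set_integrable lborel {-1..1} d"
proof -
  have "set_integrable lborel {-1..1} (\<lambda>x::real. 1/2::real)"
    by (rule borel_integrable_atLeastAtMost') (auto intro: continuous_intros)
  moreover have "set_integrable lborel {-1..1} (\<lambda>x. 1/2 * (d x)\<^sup>2)"
    using assms by (simp add: H01_deriv_def)
  ultimately have bound: "set_integrable lborel {-1..1} (\<lambda>x. 1/2 + 1/2 * (d x)\<^sup>2)"
    by (rule set_integral_add(1))
  have "set_borel_measurable lborel {-1..1} d"
    using assms by (simp add: H01_deriv_def)
  thus ?thesis
  proof (rule set_integrable_bound[OF bound])
    show "AE x in lborel. x \<in> {-1..1} \<longrightarrow> norm (d x) \<le> norm (1/2 + 1/2 * (d x)\<^sup>2)"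
    proof (rule AE_I2, safe)
      fix x :: real
      have "\<bar>d x\<bar> \<le> 1/2 + 1/2 * (d x)\<^sup>2"
        using zero_le_power2[of "\<bar>d x\<bar> - 1"] by (simp add: power2_eq_square algebra_simps)
      thus "norm (d x) \<le> norm (1/2 + 1/2 * (d x)\<^sup>2)" by simp
    qed
  qed
qed

lemma H01_eq_integral:
  assumes "H01_deriv \<psi> d" and "x \<in> {-1..1}"
  shows "\<psi> x = integral {-1..x} d"
proof -
  have "set_integrable lborel {-1..x} d"
    by (rule set_integrable_subset[OF H01_deriv_set_integrable[OF assms(1)]]) (use assms(2) in auto)
  thus ?thesis
    using assms interval_integral_eq_integral[of "-1" x d] by (auto simp: H01_deriv_def one_ereal_def)
qed

lemma H01_deriv_integrable: "H01_deriv \<psi> d \<Longrightarrow> d integrable_on {-1..1}"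
  by (rule set_borel_integral_eq_integral(1)[OF H01_deriv_set_integrable])

lemma H01_boundary:
  assumes "H01_deriv \<psi> d"
  shows "\<psi> (-1) = 0" and "\<psi> 1 = 0"
  using H01_eq_integral[OF assms, of "-1"] assms by (simp_all add: H01_deriv_def)

lemma H01_continuous_on:
  assumes "H01_deriv \<psi> d"
  shows "continuous_on {-1..1} \<psi>"
  using indefinite_integral_continuous_1[OF H01_deriv_integrable[OF assms]]
  by (rule continuous_on_eq) (simp add: H01_eq_integral[OF assms])

lemma H01_deriv_of_C1:
  assumes "\<And>x. (F has_real_derivative f x) (at x)" and "continuous_on UNIV f"
    and "F (-1) = 0" and "F 1 = 0"
  shows "H01_deriv F f"
  unfolding H01_deriv_def
proof (intro conjI ballI)
  show "set_borel_measurable lborel {-1..1} f"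
    unfolding set_borel_measurable_def
    using borel_measurable_continuous_on_indicator[of "{-1..1}" f] continuous_on_subset[OF assms(2)] by simp
  show "set_integrable lborel {-1..1} (\<lambda>x. (f x)\<^sup>2)"
    by (intro borel_integrable_atLeastAtMost' continuous_intros continuous_on_subset[OF assms(2)]) simp
  fix x :: real assume "x \<in> {-1..1}"
  hence "(LBINT t=ereal (-1)..ereal x. f t) = F x - F (-1)"
    by (intro interval_integral_FTC_finite)
       (auto intro: continuous_on_subset[OF assms(2)]
             simp: has_real_derivative_iff_has_vector_derivative[symmetric] has_field_derivative_at_within assms(1))
  thus "F x = (LBINT t=-1..x. f t)" using assms(3) by (simp add: one_ereal_def)
qed (fact assms(4))

lemma integral_square_le_length_mult:
  fixes f :: "real \<Rightarrow> real"
  assumes "a \<le> b" and f: "f integrable_on {a..b}" and f2: "(\<lambda>x. (f x)\<^sup>2) integrable_on {a..b}"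
  shows "(integral {a..b} f)\<^sup>2 \<le> (b - a) * integral {a..b} (\<lambda>x. (f x)\<^sup>2)"
proof (cases "a = b")
  case False
  hence len: "b - a > 0" using assms(1) by simp
  define I where "I = integral {a..b} f"
  define I2 where "I2 = integral {a..b} (\<lambda>x. (f x)\<^sup>2)"
  define c where "c = I / (b - a)"
  have "((\<lambda>x. (f x)\<^sup>2 - 2 * c * f x + c\<^sup>2) has_integral (I2 - 2 * c * I + (b - a) * c\<^sup>2)) {a..b}"
    using has_integral_add[OF has_integral_diff[OF integrable_integral[OF f2]
          has_integral_mult_right[OF integrable_integral[OF f], of "2 * c"]]
          has_integral_const_real[of "c\<^sup>2" a b]] assms(1)
    by (simp add: I_def I2_def)
  hence "0 \<le> I2 - 2 * c * I + (b - a) * c\<^sup>2"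
  proof (rule has_integral_nonneg)
    show "0 \<le> (f x)\<^sup>2 - 2 * c * f x + c\<^sup>2" for x
      using zero_le_power2[of "f x - c"] by (simp add: power2_eq_square algebra_simps)
  qed
  also have "I2 - 2 * c * I + (b - a) * c\<^sup>2 = I2 - I\<^sup>2 / (b - a)"
  proof -
    have "\<And>t. t > 0 \<Longrightarrow> I2 - 2 * (I / t) * I + t * (I / t)\<^sup>2 = I2 - I\<^sup>2 / t"
      by (simp add: field_simps power2_eq_square)
    from this[OF len] show ?thesis by (simp add: c_def)
  qed
  finally show ?thesis using len by (simp add: I_def I2_def field_simps)
qed simp

lemma H01_increment_square_le:
  assumes "H01_deriv \<psi> d" and "-1 \<le> a" "a \<le> b" "b \<le> 1"
  shows "(\<psi> b - \<psi> a)\<^sup>2 \<le> (b - a) * integral {a..b} (\<lambda>x. (d x)\<^sup>2)"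
proof -
  have sub: "{a..b} \<subseteq> {-1..1}" using assms by auto
  have "integral {-1..a} d + integral {a..b} d = integral {-1..b} d"
    using assms H01_deriv_integrable[OF assms(1)] integrable_subinterval_real
    by (intro Henstock_Kurzweil_Integration.integral_combine) fastforce+
  hence "\<psi> b - \<psi> a = integral {a..b} d"
    using assms by (simp add: H01_eq_integral)
  moreover have "(integral {a..b} d)\<^sup>2 \<le> (b - a) * integral {a..b} (\<lambda>x. (d x)\<^sup>2)"
    using integrable_on_subinterval[OF H01_deriv_integrable[OF assms(1)] sub]
      integrable_on_subinterval[OF H01_deriv_square_integrable[OF assms(1)] sub]
    by (rule integral_square_le_length_mult[OF assms(3)])
  ultimately show ?thesis by simp
qed

lemma H01_square_le:
  assumes "H01_deriv \<psi> d" and "x \<in> {-1..1}"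
  shows "(\<psi> x)\<^sup>2 \<le> (x + 1) * integral {-1..1} (\<lambda>t. (d t)\<^sup>2)"
proof -
  have "(\<psi> x - \<psi> (-1))\<^sup>2 \<le> (x + 1) * integral {-1..x} (\<lambda>t. (d t)\<^sup>2)"
    using H01_increment_square_le[OF assms(1), of "-1" x] assms(2) by auto
  also have "\<dots> \<le> (x + 1) * integral {-1..1} (\<lambda>t. (d t)\<^sup>2)"
    using assms H01_deriv_square_integrable[OF assms(1)]
    by (intro mult_left_mono integral_subset_le) (auto intro: integrable_on_subinterval)
  finally show ?thesis using H01_boundary(1)[OF assms(1)] by simp
qed

lemma H01_square_at_zero_le:
  assumes "H01_deriv \<psi> d" and "0 < \<delta>" "\<delta> \<le> 1"
  shows "\<delta> * (\<psi> 0)\<^sup>2 \<le> 2 * integral {-1..1} (\<lambda>x. (\<psi> x)\<^sup>2) + 2 * \<delta>\<^sup>2 * integral {-1..1} (\<lambda>x. (d x)\<^sup>2)"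
proof -
  define D where "D = integral {-1..1} (\<lambda>x. (d x)\<^sup>2)"
  have cont: "continuous_on {-1..1} (\<lambda>x. (\<psi> x)\<^sup>2)"
    using H01_continuous_on[OF assms(1)] by (intro continuous_intros)
  have int: "(\<lambda>x. (\<psi> x)\<^sup>2) integrable_on {0..\<delta>}"
    by (rule integrable_continuous_interval, rule continuous_on_subset[OF cont]) (use assms in auto)
  have pointwise: "(\<psi> 0)\<^sup>2 \<le> 2 * (\<psi> x)\<^sup>2 + 2 * \<delta> * D" if x: "x \<in> {0..\<delta>}" for x
  proof -
    have "(\<psi> x - \<psi> 0)\<^sup>2 \<le> x * integral {0..x} (\<lambda>x. (d x)\<^sup>2)"
      using H01_increment_square_le[OF assms(1), of 0 x] x assms by auto
    also have "\<dots> \<le> \<delta> * D"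
      unfolding D_def using x assms H01_deriv_square_integrable[OF assms(1)]
      by (intro mult_mono integral_subset_le integral_nonneg) (auto intro: integrable_on_subinterval)
    finally have "(\<psi> x - \<psi> 0)\<^sup>2 \<le> \<delta> * D" .
    moreover have "(\<psi> 0)\<^sup>2 \<le> 2 * (\<psi> x)\<^sup>2 + 2 * (\<psi> x - \<psi> 0)\<^sup>2"
      using zero_le_power2[of "2 * \<psi> x - \<psi> 0"] by (simp add: power2_eq_square algebra_simps)
    ultimately show ?thesis by linarith
  qed
  have "\<delta> * (\<psi> 0)\<^sup>2 = integral {0..\<delta>} (\<lambda>x. (\<psi> 0)\<^sup>2)"
    using assms by simp
  also have "\<dots> \<le> integral {0..\<delta>} (\<lambda>x. 2 * (\<psi> x)\<^sup>2 + 2 * \<delta> * D)"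
    using pointwise int by (intro integral_le integrable_add integrable_cmul) auto
  also have "\<dots> = 2 * integral {0..\<delta>} (\<lambda>x. (\<psi> x)\<^sup>2) + 2 * \<delta>\<^sup>2 * D"
    using int assms by (subst integral_add) (auto simp: power2_eq_square)
  also have "integral {0..\<delta>} (\<lambda>x. (\<psi> x)\<^sup>2) \<le> integral {-1..1} (\<lambda>x. (\<psi> x)\<^sup>2)"
    using assms int integrable_continuous_interval[OF cont] by (intro integral_subset_le) auto
  finally show ?thesis using assms unfolding D_def by simp
qed

lemma integral_square_eq_0_imp_eq_0:
  fixes f :: "real \<Rightarrow> real"
  assumes "continuous_on {-1..1} f" and "integral {-1..1} (\<lambda>x. (f x)\<^sup>2) = 0" and "x \<in> {-1..1}"
  shows "f x = 0"
proof -
  have cont: "continuous_on (cbox (-1) 1) (\<lambda>x. (f x)\<^sup>2)"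
    using assms(1) by (auto intro: continuous_intros)
  have "((\<lambda>x. (f x)\<^sup>2) has_integral 0) (cbox (-1) 1)"
    using integrable_integral[OF integrable_continuous[OF cont]] assms(2) by simp
  hence "(f x)\<^sup>2 = 0"
    using assms(3) by (intro has_integral_0_cbox_imp_0[OF cont]) auto
  thus ?thesis by simp
qed

lemma H01_LBINT_combination:
  assumes "H01_deriv \<psi> d"
  shows "(LBINT x=-1..1. p * (d x)\<^sup>2 + q * (\<psi> x)\<^sup>2) =
    p * integral {-1..1} (\<lambda>x. (d x)\<^sup>2) + q * integral {-1..1} (\<lambda>x. (\<psi> x)\<^sup>2)"
proof -
  have cont: "continuous_on {-1..1} (\<lambda>x. (\<psi> x)\<^sup>2)"
    using H01_continuous_on[OF assms] by (intro continuous_intros)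
  have "set_integrable lborel {-1..1} (\<lambda>x. p * (d x)\<^sup>2 + q * (\<psi> x)\<^sup>2)"
    using assms borel_integrable_atLeastAtMost'[OF cont]
    by (intro set_integral_add(1)) (auto simp: H01_deriv_def)
  hence "(LBINT x=-1..1. p * (d x)\<^sup>2 + q * (\<psi> x)\<^sup>2) = integral {-1..1} (\<lambda>x. p * (d x)\<^sup>2 + q * (\<psi> x)\<^sup>2)"
    by (rule interval_integral_minus_one_one)
  also have "\<dots> = p * integral {-1..1} (\<lambda>x. (d x)\<^sup>2) + q * integral {-1..1} (\<lambda>x. (\<psi> x)\<^sup>2)"
    by (intro integral_unique has_integral_add has_integral_mult_right integrable_integral
        H01_deriv_square_integrable[OF assms] integrable_continuous_interval cont)
  finally show ?thesis .
qed

lemma H01_LBINT_square: "H01_deriv \<psi> d \<Longrightarrow> (LBINT x=-1..1. (\<psi> x)\<^sup>2) = integral {-1..1} (\<lambda>x. (\<psi> x)\<^sup>2)"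
  using H01_LBINT_combination[of \<psi> d 0 1] by simp

lemma H01_integral_square_nonneg:
  assumes "H01_deriv \<psi> d"
  shows "0 \<le> integral {-1..1} (\<lambda>x. (\<psi> x)\<^sup>2)"
  using H01_continuous_on[OF assms]
  by (intro integral_nonneg integrable_continuous_interval continuous_intros) auto

lemma H01_integral_deriv_square_nonneg: "H01_deriv \<psi> d \<Longrightarrow> 0 \<le> integral {-1..1} (\<lambda>x. (d x)\<^sup>2)"
  by (auto intro!: integral_nonneg H01_deriv_square_integrable)

lemma E0'_eq_integrals:
  assumes "H01_deriv \<psi> d"
  shows "E0' g rho nB \<xi> \<psi> d = 1/2 * (nB\<^sup>2 * \<xi>\<^sup>2 * integral {-1..1} (\<lambda>x. (\<psi> x)\<^sup>2)
    + nB\<^sup>2 * integral {-1..1} (\<lambda>x. (d x)\<^sup>2)) - 1/2 * g * rho * (\<psi> 0)\<^sup>2"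
proof -
  have "(\<lambda>x. nB\<^sup>2 * (\<xi>\<^sup>2 * (\<psi> x)\<^sup>2 + (d x)\<^sup>2)) = (\<lambda>x. nB\<^sup>2 * (d x)\<^sup>2 + (nB\<^sup>2 * \<xi>\<^sup>2) * (\<psi> x)\<^sup>2)"
    by (simp add: algebra_simps)
  thus ?thesis
    unfolding E0'_def using H01_LBINT_combination[OF assms, of "nB\<^sup>2" "nB\<^sup>2 * \<xi>\<^sup>2"]
    by (simp add: algebra_simps)
qed

lemma H01_sum_square_increments_le:
  fixes y :: "nat \<Rightarrow> real"
  assumes "H01_deriv \<psi> d"
    and "\<And>k. k \<le> n \<Longrightarrow> y k \<in> {-1..1}" and "y 0 = -1" and "y n = 1"
    and "\<And>k. k < n \<Longrightarrow> y k \<le> y (Suc k)" and "\<And>k. k < n \<Longrightarrow> y (Suc k) - y k \<le> h"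
  shows "(\<Sum>k<n. (\<psi> (y (Suc k)) - \<psi> (y k))\<^sup>2) \<le> h * integral {-1..1} (\<lambda>x. (d x)\<^sup>2)"
proof -
  define F where "F t = integral {-1..t} (\<lambda>x. (d x)\<^sup>2)" for t
  have int: "(\<lambda>x. (d x)\<^sup>2) integrable_on {-1..1}"
    by (rule H01_deriv_square_integrable[OF assms(1)])
  have step: "(\<psi> (y (Suc k)) - \<psi> (y k))\<^sup>2 \<le> h * (F (y (Suc k)) - F (y k))" if k: "k < n" for k
  proof -
    have range: "-1 \<le> y k" "y (Suc k) \<le> 1" "y k \<le> y (Suc k)"
      using assms(2)[of k] assms(2)[of "Suc k"] assms(5)[OF k] k by auto
    have "integral {-1..y k} (\<lambda>x. (d x)\<^sup>2) + integral {y k..y (Suc k)} (\<lambda>x. (d x)\<^sup>2) = F (y (Suc k))"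
      unfolding F_def using range int
      by (intro Henstock_Kurzweil_Integration.integral_combine) (auto intro: integrable_on_subinterval)
    hence eq: "integral {y k..y (Suc k)} (\<lambda>x. (d x)\<^sup>2) = F (y (Suc k)) - F (y k)"
      by (simp add: F_def)
    have "(\<psi> (y (Suc k)) - \<psi> (y k))\<^sup>2 \<le> (y (Suc k) - y k) * integral {y k..y (Suc k)} (\<lambda>x. (d x)\<^sup>2)"
      using range by (intro H01_increment_square_le[OF assms(1)])
    also have "\<dots> \<le> h * integral {y k..y (Suc k)} (\<lambda>x. (d x)\<^sup>2)"
      using range int assms(6)[OF k]
      by (intro mult_right_mono integral_nonneg) (auto intro: integrable_on_subinterval)
    finally show ?thesis by (simp add: eq)
  qed
  have "(\<Sum>k<n. (\<psi> (y (Suc k)) - \<psi> (y k))\<^sup>2) \<le> (\<Sum>k<n. h * (F (y (Suc k)) - F (y k)))"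
    using step by (intro sum_mono) auto
  also have "\<dots> = h * (F (y n) - F (y 0))"
    using sum_lessThan_telescope[of "\<lambda>k. F (y k)" n] by (simp add: sum_distrib_left[symmetric])
  finally show ?thesis by (simp add: assms(3,4) F_def)
qed

section \<open>The critical constants as suprema\<close>

lemma H01_deriv_one_minus_square: "H01_deriv (\<lambda>x. 1 - x\<^sup>2) (\<lambda>x. - 2 * x)"
  by (rule H01_deriv_of_C1) (auto intro!: derivative_eq_intros continuous_intros)

lemma nonzero_on_one_minus_square: "nonzero_on (\<lambda>x::real. 1 - x\<^sup>2)"
  unfolding nonzero_on_def by (rule bexI[of _ 0]) auto

lemma Bc_sq_bdd_above:
  assumes "0 \<le> g * rho"
  shows "bdd_above {g * rho * (\<psi> 0)\<^sup>2 / (LBINT x=-1..1. (d\<psi> x)\<^sup>2) | \<psi> d\<psi>. H01_deriv \<psi> d\<psi> \<and> nonzero_on \<psi>}"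
proof (rule bdd_aboveI[of _ "g * rho"], safe)
  fix \<psi> d assume h: "H01_deriv \<psi> d"
  define D where "D = integral {-1..1} (\<lambda>x. (d x)\<^sup>2)"
  have "g * rho * (\<psi> 0)\<^sup>2 \<le> g * rho * D"
    using H01_square_le[OF h, of 0] assms by (intro mult_left_mono) (auto simp: D_def)
  moreover have "0 \<le> D"
    unfolding D_def by (rule H01_integral_deriv_square_nonneg[OF h])
  ultimately have "g * rho * (\<psi> 0)\<^sup>2 / D \<le> g * rho"
    using assms by (cases "D = 0") (auto simp: divide_le_eq)
  thus "g * rho * (\<psi> 0)\<^sup>2 / (LBINT x=-1..1. (d x)\<^sup>2) \<le> g * rho"
    by (simp add: H01_LBINT_deriv_square[OF h] D_def)
qed

lemma Bc_sq_upper: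
  assumes "0 \<le> g * rho" and "H01_deriv \<psi> d" and "nonzero_on \<psi>"
  shows "g * rho * (\<psi> 0)\<^sup>2 / integral {-1..1} (\<lambda>x. (d x)\<^sup>2) \<le> Bc_sq g rho"
  unfolding Bc_sq_def H01_LBINT_deriv_square[OF assms(2), symmetric]
  using assms by (intro cSup_upper[OF _ Bc_sq_bdd_above]) blast+

lemma Bc_sq_nonneg:
  assumes "0 \<le> g * rho"
  shows "0 \<le> Bc_sq g rho"
proof -
  have "0 \<le> integral {-1..1} (\<lambda>x::real. (- 2 * x)\<^sup>2)"
    by (rule H01_integral_deriv_square_nonneg[OF H01_deriv_one_minus_square])
  hence "0 \<le> g * rho * (1 - 0\<^sup>2)\<^sup>2 / integral {-1..1} (\<lambda>x::real. (- 2 * x)\<^sup>2)"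
    using assms by simp
  also have "\<dots> \<le> Bc_sq g rho"
    by (rule Bc_sq_upper[OF assms H01_deriv_one_minus_square nonzero_on_one_minus_square])
  finally show ?thesis .
qed

lemma H01_Bc_sq_bound:
  assumes "0 \<le> g * rho" and "H01_deriv \<psi> d"
  shows "g * rho * (\<psi> 0)\<^sup>2 \<le> Bc_sq g rho * integral {-1..1} (\<lambda>x. (d x)\<^sup>2)"
proof (cases "\<psi> 0 = 0")
  case True
  thus ?thesis using Bc_sq_nonneg[OF assms(1)] H01_integral_deriv_square_nonneg[OF assms(2)] by simp
next
  case False
  hence "nonzero_on \<psi>" by (auto simp: nonzero_on_def intro!: bexI[of _ 0])
  moreover have "0 < integral {-1..1} (\<lambda>x. (d x)\<^sup>2)"
  proof -
    have "(\<psi> 0)\<^sup>2 \<le> integral {-1..1} (\<lambda>x. (d x)\<^sup>2)"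
      using H01_square_le[OF assms(2), of 0] by simp
    moreover have "0 < (\<psi> 0)\<^sup>2" using False by simp
    ultimately show ?thesis by linarith
  qed
  ultimately show ?thesis
    using Bc_sq_upper[OF assms] by (simp add: divide_le_eq mult.commute)
qed

lemma xi_hc_sq_bdd_above:
  assumes "0 < g * rho" and "nB \<noteq> 0"
  shows "bdd_above {(g * rho * (\<psi> 0)\<^sup>2 - nB\<^sup>2 * (LBINT x=-1..1. (d\<psi> x)\<^sup>2))
                      / (nB\<^sup>2 * (LBINT x=-1..1. (\<psi> x)\<^sup>2)) | \<psi> d\<psi>. H01_deriv \<psi> d\<psi> \<and> nonzero_on \<psi>}"
proof -
  define \<delta> where "\<delta> = min 1 (nB\<^sup>2 / (2 * g * rho))"
  have \<delta>: "0 < \<delta>" "\<delta> \<le> 1" "2 * \<delta> * g * rho \<le> nB\<^sup>2"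
    using assms by (auto simp: \<delta>_def min_def field_simps)
  define K where "K = 2 * g * rho / (\<delta> * nB\<^sup>2)"
  have K: "0 \<le> K" using assms \<delta> by (simp add: K_def)
  show ?thesis
  proof (rule bdd_aboveI[of _ K], safe)
    fix \<psi> d assume h: "H01_deriv \<psi> d"
    define I where "I = integral {-1..1} (\<lambda>x. (\<psi> x)\<^sup>2)"
    define D where "D = integral {-1..1} (\<lambda>x. (d x)\<^sup>2)"
    have ID: "0 \<le> I" "0 \<le> D"
      unfolding I_def D_def by (simp_all add: H01_integral_square_nonneg[OF h] H01_integral_deriv_square_nonneg[OF h])
    have "g * rho * (\<delta> * (\<psi> 0)\<^sup>2) \<le> g * rho * (2 * I + 2 * \<delta>\<^sup>2 * D)"
      using H01_square_at_zero_le[OF h \<delta>(1,2)] assms by (intro mult_left_mono) (auto simp: I_def D_def)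
    also have "\<dots> \<le> 2 * g * rho * I + \<delta> * nB\<^sup>2 * D"
      using \<delta> ID mult_right_mono[OF \<delta>(3), of "\<delta> * D"] by (simp add: algebra_simps power2_eq_square)
    finally have "\<delta> * (g * rho * (\<psi> 0)\<^sup>2 - nB\<^sup>2 * D) \<le> 2 * g * rho * I"
      by (simp add: algebra_simps)
    hence num: "g * rho * (\<psi> 0)\<^sup>2 - nB\<^sup>2 * D \<le> K * (nB\<^sup>2 * I)"
      using \<delta> assms by (simp add: K_def field_simps)
    have "(g * rho * (\<psi> 0)\<^sup>2 - nB\<^sup>2 * D) / (nB\<^sup>2 * I) \<le> K"
    proof (cases "I = 0")
      case False
      hence "0 < nB\<^sup>2 * I" using ID assms by simp
      thus ?thesis using num by (simp add: divide_le_eq)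
    qed (simp add: K)
    thus "(g * rho * (\<psi> 0)\<^sup>2 - nB\<^sup>2 * (LBINT x=-1..1. (d x)\<^sup>2)) / (nB\<^sup>2 * (LBINT x=-1..1. (\<psi> x)\<^sup>2)) \<le> K"
      by (simp add: H01_LBINT_square[OF h] H01_LBINT_deriv_square[OF h] I_def D_def)
  qed
qed

lemma H01_xi_hc_sq_bound:
  assumes "0 < g * rho" and "nB \<noteq> 0" and "H01_deriv \<psi> d" and "\<psi> 0 \<noteq> 0"
  shows "g * rho * (\<psi> 0)\<^sup>2 - nB\<^sup>2 * integral {-1..1} (\<lambda>x. (d x)\<^sup>2)
    \<le> xi_hc_sq g rho nB * (nB\<^sup>2 * integral {-1..1} (\<lambda>x. (\<psi> x)\<^sup>2))"
proof -
  define I where "I = integral {-1..1} (\<lambda>x. (\<psi> x)\<^sup>2)"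
  have "nonzero_on \<psi>" using assms(4) by (auto simp: nonzero_on_def intro!: bexI[of _ 0])
  hence le: "(g * rho * (\<psi> 0)\<^sup>2 - nB\<^sup>2 * integral {-1..1} (\<lambda>x. (d x)\<^sup>2)) / (nB\<^sup>2 * I)
      \<le> xi_hc_sq g rho nB"
    unfolding xi_hc_sq_def I_def H01_LBINT_square[OF assms(3), symmetric]
      H01_LBINT_deriv_square[OF assms(3), symmetric]
    using assms(3) by (intro cSup_upper[OF _ xi_hc_sq_bdd_above[OF assms(1,2)]]) blast
  have "I \<noteq> 0"
    using integral_square_eq_0_imp_eq_0[OF H01_continuous_on[OF assms(3)], of 0] assms(4)
    by (auto simp: I_def)
  moreover have "0 \<le> I"
    unfolding I_def by (rule H01_integral_square_nonneg[OF assms(3)])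
  ultimately have "0 < nB\<^sup>2 * I" using assms(2) by simp
  with le show ?thesis by (simp add: pos_divide_le_eq I_def)
qed

section \<open>Approximation of \<open>H\<^sub>0\<^sup>1\<close> functions in \<open>H\<^sub>0\<^sup>2\<close>\<close>

definition node :: "nat \<Rightarrow> nat \<Rightarrow> real" where
  "node n k = max (-1) (min 1 (2 * (real k - 1) / real n - 1))"

lemma node_in_range: "node n k \<in> {-1..1}"
  by (simp add: node_def)

lemma node_mono: "k \<le> l \<Longrightarrow> node n k \<le> node n l"
  unfolding node_def by (intro max.mono min.mono diff_right_mono divide_right_mono) auto

lemma clamp_diff_le: "a \<le> b \<Longrightarrow> max (-1) (min 1 b) - max (-1) (min 1 a) \<le> b - (a::real)"
  by (simp add: max_def min_def)

lemma node_step_le: "node n (Suc k) - node n k \<le> 2 / real n"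
proof -
  have "2 * (real (Suc k) - 1) / real n - 1 - (2 * (real k - 1) / real n - 1) = 2 / real n"
    by (simp add: field_simps diff_divide_distrib)
  thus ?thesis
    unfolding node_def using clamp_diff_le[of "2 * (real k - 1) / real n - 1" "2 * (real (Suc k) - 1) / real n - 1"]
    by (simp add: divide_right_mono)
qed

lemma clamp_eq_minus_one: "a \<le> -1 \<Longrightarrow> max (-1) (min 1 a) = (-1::real)"
  by (simp add: max_def min_def)

lemma clamp_eq_one: "1 \<le> a \<Longrightarrow> max (-1) (min 1 a) = (1::real)"
  by (simp add: max_def min_def)

lemma node_first: "node n 0 = -1" "node n 1 = -1"
  unfolding node_def by (auto intro!: clamp_eq_minus_one)

lemma node_last: "0 < n \<Longrightarrow> node n (n + 1) = 1" "0 < n \<Longrightarrow> node n (n + 2) = 1"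
  unfolding node_def by (auto intro!: clamp_eq_one simp: field_simps)

lemma node_close:
  assumes "0 < n" and "k \<le> n + 2"
  shows "\<bar>node n k - (2 * real k / real (n + 2) - 1)\<bar> \<le> 2 / real n"
proof -
  define x where "x = 2 * real k / real (n + 2) - 1"
  define u where "u = 2 * (real k - 1) / real n - 1"
  have x: "-1 \<le> x" "x \<le> 1" using assms by (auto simp: x_def field_simps)
  have "u - x = 2 * (2 * real k - real n - 2) / (real n * real (n + 2))"
    using assms by (simp add: u_def x_def field_simps)
  moreover have "\<bar>2 * real k - real n - 2\<bar> \<le> real (n + 2)" using assms by simp
  ultimately have "\<bar>u - x\<bar> \<le> 2 * real (n + 2) / (real n * real (n + 2))"
    using assms by (simp add: abs_mult divide_right_mono)
  also have "\<dots> = 2 / real n"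
    by (rule nonzero_mult_divide_mult_cancel_right) simp
  finally show ?thesis
    unfolding node_def u_def[symmetric] x_def[symmetric] using x by (simp add: max_def min_def abs_le_iff)
qed

lemma bernstein_poly_H02:
  assumes "c 0 = 0" and "c 1 = 0" and "c (n + 1) = 0" and "c (n + 2) = 0"
  shows "H02_derivs (bernstein_poly c (n + 2))
           (\<lambda>x. real (n + 2) / 2 * bernstein_poly (forward_diff c) (n + 1) x)
           (\<lambda>x. real (n + 2) / 2 * (real (n + 1) / 2 * bernstein_poly (forward_diff (forward_diff c)) n x))"
  unfolding H02_derivs_def
proof
  show "H01_deriv (bernstein_poly c (n + 2)) (\<lambda>x. real (n + 2) / 2 * bernstein_poly (forward_diff c) (n + 1) x)"
    using bernstein_poly_has_real_derivative[of c "n + 1"] assms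
    by (intro H01_deriv_of_C1) (auto intro!: continuous_intros)
  show "H01_deriv (\<lambda>x. real (n + 2) / 2 * bernstein_poly (forward_diff c) (n + 1) x)
    (\<lambda>x. real (n + 2) / 2 * (real (n + 1) / 2 * bernstein_poly (forward_diff (forward_diff c)) n x))"
    using bernstein_poly_has_real_derivative[of "forward_diff c" n] assms
    by (intro H01_deriv_of_C1 DERIV_cmult) (auto intro!: continuous_intros simp: forward_diff_def)
qed

definition H02_approx :: "(real \<Rightarrow> real) \<Rightarrow> nat \<Rightarrow> real \<Rightarrow> real" where
  "H02_approx \<psi> n = bernstein_poly (\<lambda>k. \<psi> (node n k)) (n + 2)"

definition H02_approx_deriv :: "(real \<Rightarrow> real) \<Rightarrow> nat \<Rightarrow> real \<Rightarrow> real" where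
  "H02_approx_deriv \<psi> n x = real (n + 2) / 2 * bernstein_poly (forward_diff (\<lambda>k. \<psi> (node n k))) (n + 1) x"

lemma H02_derivs_H02_approx:
  assumes "H01_deriv \<psi> d" and "0 < n"
  obtains dd where "H02_derivs (H02_approx \<psi> n) (H02_approx_deriv \<psi> n) dd"
proof -
  have "\<psi> (node n 0) = 0" "\<psi> (node n 1) = 0" "\<psi> (node n (n + 1)) = 0" "\<psi> (node n (n + 2)) = 0"
    by (simp_all only: node_first node_last[OF assms(2)] H01_boundary[OF assms(1)])
  hence "H02_derivs (H02_approx \<psi> n) (H02_approx_deriv \<psi> n)
    (\<lambda>x. real (n + 2) / 2 * (real (n + 1) / 2 * bernstein_poly (forward_diff (forward_diff (\<lambda>k. \<psi> (node n k)))) n x))"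
    unfolding H02_approx_def H02_approx_deriv_def[abs_def] by (rule bernstein_poly_H02)
  thus thesis by (rule that)
qed

lemma integral_square_H02_approx_deriv_le:
  assumes "H01_deriv \<psi> d" and "0 < n"
  shows "integral {-1..1} (\<lambda>x. (H02_approx_deriv \<psi> n x)\<^sup>2)
    \<le> (1 + 2 / real n) * integral {-1..1} (\<lambda>x. (d x)\<^sup>2)"
proof -
  define c where "c = (\<lambda>k. \<psi> (node n k))"
  have "integral {-1..1} (\<lambda>x. (H02_approx_deriv \<psi> n x)\<^sup>2)
      = (real (n + 2) / 2)\<^sup>2 * integral {-1..1} (\<lambda>x. (bernstein_poly (forward_diff c) (n + 1) x)\<^sup>2)"
  proof -
    have "(\<lambda>x. (H02_approx_deriv \<psi> n x)\<^sup>2)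
        = (\<lambda>x. (real (n + 2) / 2)\<^sup>2 * (bernstein_poly (forward_diff c) (n + 1) x)\<^sup>2)"
      by (simp add: fun_eq_iff H02_approx_deriv_def c_def power2_eq_square)
    thus ?thesis by simp
  qed
  also have "\<dots> \<le> (real (n + 2) / 2)\<^sup>2 * (2 / real (Suc (n + 1)) * (\<Sum>k\<le>n + 1. (forward_diff c k)\<^sup>2))"
    by (rule mult_left_mono[OF integral_square_bernstein_poly_le]) simp
  also have "\<dots> = real (n + 2) / 2 * (\<Sum>k<n + 2. (\<psi> (node n (Suc k)) - \<psi> (node n k))\<^sup>2)"
  proof -
    have sums: "(\<Sum>k\<le>n + 1. (forward_diff c k)\<^sup>2) = (\<Sum>k<n + 2. (\<psi> (node n (Suc k)) - \<psi> (node n k))\<^sup>2)"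
      unfolding c_def forward_diff_def by (rule sum.cong) auto
    have "(real (n + 2) / 2)\<^sup>2 * (2 / real (Suc (n + 1)) * S) = real (n + 2) / 2 * S" for S
      by (simp add: power2_eq_square field_simps)
    thus ?thesis unfolding sums .
  qed
  also have "\<dots> \<le> real (n + 2) / 2 * (2 / real n * integral {-1..1} (\<lambda>x. (d x)\<^sup>2))"
    using node_in_range node_step_le node_mono node_first node_last[OF assms(2)]
    by (intro mult_left_mono H01_sum_square_increments_le[OF assms(1), of "n + 2" "node n"]) auto
  also have "\<dots> = (1 + 2 / real n) * integral {-1..1} (\<lambda>x. (d x)\<^sup>2)"
    using assms by (simp add: field_simps)
  finally show ?thesis .
qed

lemma uniform_limit_H02_approx:
  assumes "continuous_on {-1..1} \<psi>"
  shows "uniform_limit {-1..1} (H02_approx \<psi>) \<psi> sequentially"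
  unfolding uniform_limit_sequentially_iff
proof (intro allI impI)
  fix e :: real assume e: "0 < e"
  obtain N1 where N1: "\<And>n x. N1 \<le> n \<Longrightarrow> x \<in> {-1..1} \<Longrightarrow>
      dist (bernstein_poly (\<lambda>k. \<psi> (2 * real k / real n - 1)) n x) (\<psi> x) < e / 2"
    using uniform_limit_bernstein_poly[OF assms] e
    unfolding uniform_limit_sequentially_iff by (meson half_gt_zero)
  obtain \<delta> where \<delta>: "0 < \<delta>"
    and cont: "\<And>s t. s \<in> {-1..1} \<Longrightarrow> t \<in> {-1..1} \<Longrightarrow> \<bar>s - t\<bar> < \<delta> \<Longrightarrow> \<bar>\<psi> s - \<psi> t\<bar> < e / 2"
    using compact_uniformly_continuous[OF assms compact_Icc] e
    unfolding uniformly_continuous_on_def dist_real_def by (meson half_gt_zero)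
  obtain N2 :: nat where N2: "2 / \<delta> < real N2" using reals_Archimedean2 by blast
  show "\<exists>N. \<forall>n\<ge>N. \<forall>x\<in>{-1..1}. dist (H02_approx \<psi> n x) (\<psi> x) < e"
  proof (intro exI allI impI ballI)
    fix n x assume n: "max N1 N2 \<le> n" and x: "x \<in> {-1..(1::real)}"
    have "2 / \<delta> < real n" using N2 n by (meson of_nat_le_iff max.bounded_iff less_le_trans)
    moreover have "0 < 2 / \<delta>" using \<delta> by simp
    ultimately have "2 < real n * \<delta>" using \<delta> by (simp add: pos_divide_less_eq)
    hence "0 < real n * \<delta>" by linarith
    hence "0 < n" using \<delta> by (simp add: zero_less_mult_iff)
    hence "2 / real n < \<delta>" using \<open>2 < real n * \<delta>\<close> by (simp add: divide_less_eq mult.commute)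
    have "\<bar>\<psi> (node n k) - \<psi> (2 * real k / real (n + 2) - 1)\<bar> \<le> e / 2" if k: "k \<le> n + 2" for k
    proof -
      have "2 * real k / real (n + 2) - 1 \<in> {-1..1}" using k by (auto simp: field_simps)
      moreover have "\<bar>node n k - (2 * real k / real (n + 2) - 1)\<bar> < \<delta>"
        using node_close[OF \<open>0 < n\<close> k] \<open>2 / real n < \<delta>\<close> by linarith
      ultimately show ?thesis using cont[OF node_in_range] by fastforce
    qed
    hence "\<bar>H02_approx \<psi> n x - bernstein_poly (\<lambda>k. \<psi> (2 * real k / real (n + 2) - 1)) (n + 2) x\<bar> \<le> e / 2"
      unfolding H02_approx_def using x by (intro bernstein_poly_diff_le) auto
    moreover have "\<bar>bernstein_poly (\<lambda>k. \<psi> (2 * real k / real (n + 2) - 1)) (n + 2) x - \<psi> x\<bar> < e / 2"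
      using N1[of "n + 2" x] n x by (simp add: dist_real_def)
    ultimately show "dist (H02_approx \<psi> n x) (\<psi> x) < e"
      unfolding dist_real_def by linarith
  qed
qed

lemma integral_square_H02_approx_tendsto:
  assumes "continuous_on {-1..1} \<psi>"
  shows "(\<lambda>n. integral {-1..1} (\<lambda>x. (H02_approx \<psi> n x)\<^sup>2)) \<longlonglongrightarrow> integral {-1..1} (\<lambda>x. (\<psi> x)\<^sup>2)"
proof -
  have unif: "uniform_limit {-1..1} (H02_approx \<psi>) \<psi> sequentially"
    by (rule uniform_limit_H02_approx[OF assms])
  have "bounded (\<psi> ` {-1..1})"
    by (intro compact_imp_bounded compact_continuous_image assms compact_Icc)
  hence sq: "uniform_limit {-1..1} (\<lambda>n x. H02_approx \<psi> n x * H02_approx \<psi> n x) (\<lambda>x. \<psi> x * \<psi> x) sequentially"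
    using unif by (intro uniform_lim_mult)
  have "continuous_on {-1..1} (\<lambda>x. H02_approx \<psi> n x * H02_approx \<psi> n x)" for n
    unfolding H02_approx_def by (intro continuous_intros)
  then obtain I J where I: "\<And>n. ((\<lambda>x. H02_approx \<psi> n x * H02_approx \<psi> n x) has_integral I n) {-1..1}"
    and J: "((\<lambda>x. \<psi> x * \<psi> x) has_integral J) {-1..1}" and lim: "I \<longlonglongrightarrow> J"
    using uniform_limit_integral[OF sq _ sequentially_bot] by blast
  have "I = (\<lambda>n. integral {-1..1} (\<lambda>x. (H02_approx \<psi> n x)\<^sup>2))"
    using I by (simp add: fun_eq_iff power2_eq_square integral_unique[symmetric])
  moreover have "J = integral {-1..1} (\<lambda>x. (\<psi> x)\<^sup>2)"
    using J by (simp add: power2_eq_square integral_unique)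
  ultimately show ?thesis using lim by simp
qed

lemma E0'_negative_imp_H02:
  assumes "H01_deriv \<psi> d" and "E0' g rho nB \<xi> \<psi> d < 0"
  obtains \<phi> d\<phi> dd\<phi> where "H02_derivs \<phi> d\<phi> dd\<phi>" and "E0' g rho nB \<xi> \<phi> d\<phi> < 0"
proof -
  define D where "D = integral {-1..1} (\<lambda>x. (d x)\<^sup>2)"
  define U where "U n = 1/2 * (nB\<^sup>2 * \<xi>\<^sup>2 * integral {-1..1} (\<lambda>x. (H02_approx \<psi> n x)\<^sup>2)
    + nB\<^sup>2 * ((1 + 2 / real n) * D)) - 1/2 * g * rho * (H02_approx \<psi> n 0)\<^sup>2" for n
  have cont: "continuous_on {-1..1} \<psi>" by (rule H01_continuous_on[OF assms(1)])
  have "(\<lambda>n. H02_approx \<psi> n 0) \<longlonglongrightarrow> \<psi> 0"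
    by (rule tendsto_uniform_limitI[OF uniform_limit_H02_approx[OF cont]]) simp
  moreover have "(\<lambda>n. (1 + 2 / real n) * D) \<longlonglongrightarrow> D"
    using tendsto_mult_right[OF tendsto_add[OF tendsto_const lim_const_over_n], of 1 2 D] by simp
  ultimately have "U \<longlonglongrightarrow> E0' g rho nB \<xi> \<psi> d"
    unfolding U_def E0'_eq_integrals[OF assms(1)] D_def
    by (intro tendsto_intros integral_square_H02_approx_tendsto[OF cont])
  hence "eventually (\<lambda>n. U n < 0) sequentially"
    using assms(2) by (rule order_tendstoD)
  moreover have "eventually (\<lambda>n. 0 < n) sequentially"
    by (rule eventually_gt_at_top)
  ultimately have "eventually (\<lambda>n. U n < 0 \<and> 0 < n) sequentially"
    by (rule eventually_conj)
  then obtain n where n: "0 < n" "U n < 0"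
    unfolding eventually_sequentially by blast
  obtain dd where H02: "H02_derivs (H02_approx \<psi> n) (H02_approx_deriv \<psi> n) dd"
    using H02_derivs_H02_approx[OF assms(1) n(1)] .
  hence "H01_deriv (H02_approx \<psi> n) (H02_approx_deriv \<psi> n)"
    by (simp add: H02_derivs_def)
  hence "E0' g rho nB \<xi> (H02_approx \<psi> n) (H02_approx_deriv \<psi> n)
      = 1/2 * (nB\<^sup>2 * \<xi>\<^sup>2 * integral {-1..1} (\<lambda>x. (H02_approx \<psi> n x)\<^sup>2)
        + nB\<^sup>2 * integral {-1..1} (\<lambda>x. (H02_approx_deriv \<psi> n x)\<^sup>2)) - 1/2 * g * rho * (H02_approx \<psi> n 0)\<^sup>2"
    by (rule E0'_eq_integrals)
  also have "\<dots> \<le> U n"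
    unfolding U_def D_def
    using mult_left_mono[OF integral_square_H02_approx_deriv_le[OF assms(1) n(1)], of "nB\<^sup>2"] by simp
  finally show thesis using n(2) H02 that by fastforce
qed

section \<open>Sign of \<open>E\<^sub>0'\<close>\<close>

lemma E0'_ge_of_Bc_le:
  assumes "0 \<le> g * rho" and "H01_deriv \<psi> d"
  shows "1/2 * (LBINT x=-1..1. (nB\<^sup>2 - (Bc g rho)\<^sup>2) * (d x)\<^sup>2 + nB\<^sup>2 * \<xi>\<^sup>2 * (\<psi> x)\<^sup>2)
    \<le> E0' g rho nB \<xi> \<psi> d"
proof -
  have "(Bc g rho)\<^sup>2 = Bc_sq g rho"
    using Bc_sq_nonneg[OF assms(1)] by (simp add: Bc_def)
  thus ?thesis
    using H01_Bc_sq_bound[OF assms]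
    unfolding H01_LBINT_combination[OF assms(2)] E0'_eq_integrals[OF assms(2)]
    by (simp add: algebra_simps)
qed

lemma E0'_nonneg_of_Bc_le:
  assumes "0 \<le> g * rho" and "Bc g rho \<le> nB" and "H01_deriv \<psi> d"
  shows "0 \<le> E0' g rho nB \<xi> \<psi> d"
proof -
  have "0 \<le> Bc g rho" using Bc_sq_nonneg[OF assms(1)] by (simp add: Bc_def)
  hence "(Bc g rho)\<^sup>2 \<le> nB\<^sup>2" using assms(2) by (intro power_mono) auto
  hence "0 \<le> (LBINT x=-1..1. (nB\<^sup>2 - (Bc g rho)\<^sup>2) * (d x)\<^sup>2 + nB\<^sup>2 * \<xi>\<^sup>2 * (\<psi> x)\<^sup>2)"
    by (simp add: H01_LBINT_combination[OF assms(3)] H01_integral_square_nonneg[OF assms(3)]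
        H01_integral_deriv_square_nonneg[OF assms(3)])
  thus ?thesis using E0'_ge_of_Bc_le[OF assms(1,3), of nB \<xi>] by linarith
qed

lemma E0'_nonneg_of_xi_hc_le:
  assumes "0 < g * rho" and "nB \<noteq> 0" and "xi_hc g rho nB \<le> \<bar>\<xi>\<bar>" and "H01_deriv \<psi> d"
  shows "0 \<le> E0' g rho nB \<xi> \<psi> d"
proof -
  define I where "I = integral {-1..1} (\<lambda>x. (\<psi> x)\<^sup>2)"
  define D where "D = integral {-1..1} (\<lambda>x. (d x)\<^sup>2)"
  have ID: "0 \<le> I" "0 \<le> D"
    unfolding I_def D_def
    by (simp_all add: H01_integral_square_nonneg[OF assms(4)] H01_integral_deriv_square_nonneg[OF assms(4)])
  have E: "E0' g rho nB \<xi> \<psi> d = 1/2 * (nB\<^sup>2 * \<xi>\<^sup>2 * I + nB\<^sup>2 * D) - 1/2 * g * rho * (\<psi> 0)\<^sup>2"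
    by (simp add: E0'_eq_integrals[OF assms(4)] I_def D_def)
  show ?thesis
  proof (cases "\<psi> 0 = 0")
    case True
    thus ?thesis unfolding E using ID by simp
  next
    case False
    have "xi_hc_sq g rho nB \<le> \<xi>\<^sup>2"
      using sqrt_le_D[of _ "\<bar>\<xi>\<bar>"] assms(3) by (simp add: xi_hc_def)
    hence "xi_hc_sq g rho nB * (nB\<^sup>2 * I) \<le> \<xi>\<^sup>2 * (nB\<^sup>2 * I)" using ID by (intro mult_right_mono) auto
    with H01_xi_hc_sq_bound[OF assms(1,2,4) False] show ?thesis
      unfolding E I_def D_def by (simp add: algebra_simps)
  qed
qed

lemma E0'_negative_of_lt_xi_hc:
  assumes "0 < g * rho" and "nB \<noteq> 0" and "0 < \<bar>\<xi>\<bar>" and "\<bar>\<xi>\<bar> < xi_hc g rho nB"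
  obtains \<psi> d where "H01_deriv \<psi> d" and "E0' g rho nB \<xi> \<psi> d < 0"
proof -
  have "\<bar>\<xi>\<bar> < sqrt (xi_hc_sq g rho nB)" using assms(4) by (simp add: xi_hc_def)
  hence "\<xi>\<^sup>2 < Sup {(g * rho * (\<psi> 0)\<^sup>2 - nB\<^sup>2 * (LBINT x=-1..1. (d\<psi> x)\<^sup>2))
                      / (nB\<^sup>2 * (LBINT x=-1..1. (\<psi> x)\<^sup>2)) | \<psi> d\<psi>. H01_deriv \<psi> d\<psi> \<and> nonzero_on \<psi>}"
    by (metis real_sqrt_abs real_sqrt_less_iff xi_hc_sq_def)
  then obtain \<psi> d where h: "H01_deriv \<psi> d"
    and lt: "\<xi>\<^sup>2 < (g * rho * (\<psi> 0)\<^sup>2 - nB\<^sup>2 * integral {-1..1} (\<lambda>x. (d x)\<^sup>2))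
                 / (nB\<^sup>2 * integral {-1..1} (\<lambda>x. (\<psi> x)\<^sup>2))"
    using H01_deriv_one_minus_square nonzero_on_one_minus_square
    by (subst (asm) less_cSup_iff[OF _ xi_hc_sq_bdd_above[OF assms(1,2)]])
       (auto simp: H01_LBINT_square H01_LBINT_deriv_square)
  have "0 \<le> integral {-1..1} (\<lambda>x. (\<psi> x)\<^sup>2)"
    by (rule H01_integral_square_nonneg[OF h])
  moreover have "nB\<^sup>2 * integral {-1..1} (\<lambda>x. (\<psi> x)\<^sup>2) \<noteq> 0"
    using lt assms(3) by auto
  ultimately have "0 < nB\<^sup>2 * integral {-1..1} (\<lambda>x. (\<psi> x)\<^sup>2)"
    using assms(2) by (simp add: less_le)
  with lt have "E0' g rho nB \<xi> \<psi> d < 0"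
    by (simp add: E0'_eq_integrals[OF h] pos_less_divide_eq algebra_simps)
  with h show thesis by (rule that)
qed

theorem lemma3p8:
  fixes g rho :: real and B :: "'b::euclidean_space"
  assumes "g > 0" and "rho > 0" and "B \<noteq> 0"
  shows
    "(norm B \<ge> Bc g rho \<longrightarrow>
       (\<forall>\<xi>::real. \<forall>\<psi> d\<psi> dd\<psi>. H02_derivs \<psi> d\<psi> dd\<psi> \<longrightarrow>
          E0' g rho (norm B) \<xi> \<psi> d\<psi> \<ge> 0 \<and>
          E0' g rho (norm B) \<xi> \<psi> d\<psi> \<ge>
            1/2 * (LBINT x=-1..1. ((norm B)\<^sup>2 - (Bc g rho)\<^sup>2) * (d\<psi> x)\<^sup>2
                                   + (norm B)\<^sup>2 * \<xi>\<^sup>2 * (\<psi> x)\<^sup>2))) \<and>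
     (norm B < Bc g rho \<longrightarrow>
       (\<forall>\<xi>::real. \<bar>\<xi>\<bar> \<ge> xi_hc g rho (norm B) \<longrightarrow>
          (\<forall>\<psi> d\<psi> dd\<psi>. H02_derivs \<psi> d\<psi> dd\<psi> \<longrightarrow> E0' g rho (norm B) \<xi> \<psi> d\<psi> \<ge> 0))) \<and>
     (norm B < Bc g rho \<longrightarrow>
       (\<forall>\<xi>::real. 0 < \<bar>\<xi>\<bar> \<and> \<bar>\<xi>\<bar> < xi_hc g rho (norm B) \<longrightarrow>
          (\<exists>\<psi> d\<psi> dd\<psi>. H02_derivs \<psi> d\<psi> dd\<psi> \<and> E0' g rho (norm B) \<xi> \<psi> d\<psi> < 0)))"
proof -
  have gr: "0 < g * rho" using assms(1,2) by simp
  have nB: "norm B \<noteq> 0" using assms(3) by simp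
  show ?thesis
  proof (intro conjI allI impI)
    fix \<xi> \<psi> d\<psi> dd\<psi>
    assume Bc: "Bc g rho \<le> norm B" and "H02_derivs \<psi> d\<psi> dd\<psi>"
    hence H01: "H01_deriv \<psi> d\<psi>" by (simp add: H02_derivs_def)
    have "0 \<le> g * rho" using gr by simp
    show "0 \<le> E0' g rho (norm B) \<xi> \<psi> d\<psi>"
      by (rule E0'_nonneg_of_Bc_le[OF \<open>0 \<le> g * rho\<close> Bc H01])
    show "1/2 * (LBINT x=-1..1. ((norm B)\<^sup>2 - (Bc g rho)\<^sup>2) * (d\<psi> x)\<^sup>2 + (norm B)\<^sup>2 * \<xi>\<^sup>2 * (\<psi> x)\<^sup>2)
        \<le> E0' g rho (norm B) \<xi> \<psi> d\<psi>"
      by (rule E0'_ge_of_Bc_le[OF \<open>0 \<le> g * rho\<close> H01])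
  next
    fix \<xi> \<psi> d\<psi> dd\<psi>
    assume "xi_hc g rho (norm B) \<le> \<bar>\<xi>\<bar>" and "H02_derivs \<psi> d\<psi> dd\<psi>"
    thus "0 \<le> E0' g rho (norm B) \<xi> \<psi> d\<psi>"
      by (intro E0'_nonneg_of_xi_hc_le[OF gr nB]) (simp_all add: H02_derivs_def)
  next
    fix \<xi> :: real
    assume "0 < \<bar>\<xi>\<bar> \<and> \<bar>\<xi>\<bar> < xi_hc g rho (norm B)"
    then obtain \<psi> d where "H01_deriv \<psi> d" "E0' g rho (norm B) \<xi> \<psi> d < 0"
      using E0'_negative_of_lt_xi_hc[OF gr nB] by blast
    then obtain \<phi> d\<phi> dd\<phi> where "H02_derivs \<phi> d\<phi> dd\<phi>" "E0' g rho (norm B) \<xi> \<phi> d\<phi> < 0"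
      by (rule E0'_negative_imp_H02)
    thus "\<exists>\<psi> d\<psi> dd\<psi>. H02_derivs \<psi> d\<psi> dd\<psi> \<and> E0' g rho (norm B) \<xi> \<psi> d\<psi> < 0" by blast
  qed
qed

end
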